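(* Let $h$ be a probability density on $\mathbb{R}^d$ that is $(\alpha,\beta)$-admissible for functions $\alpha,\beta:(0,\infty)\to(0,\infty)$, let $\epsilon>0$ and $k\in(0,2)$, and set $\alpha'=\alpha(k\epsilon)$ and $\beta'=\beta((2-k)\epsilon)$. Let $f:D^n\to\mathbb{R}^d$ and let $S:D^n\to(0,\infty)$ be a $\beta'$-smooth upper bound on the local sensitivity of $f$. Let $Z$ be a random variable with density $h$. Then the randomized algorithm $A(x)=f(x)+\frac{S(x)}{\alpha'}\cdot Z$ is $\epsilon$-differentially private.
   Context: $D^n$ denotes the set of datasets consisting of $n$ elements from a domain $D$. The Hamming distance is $d(x,y)=|\{i:x_i\neq y_i\}|$; $x,y$ are neighboring if $d(x,y)=1$. A randomized mechanism $M$ is $\epsilon$-differentially private if for all neighboring $x,y\in D^n$ and all measurable sets $\mathcal{S}$ of outputs, $\Pr[M(x)\in\mathcal{S}]\le e^{\epsilon}\Pr[M(y)\in\mathcal{S}]$. The local sensitivity of $f:D^n\to\mathbb{R}^d$ at $x$ is $LS_f(x)=\max_{y:d(x,y)=1}\|f(x)-f(y)\|_1$. For $\beta>0$, a function $S:D^n\to\mathbb{R}$ is a $\beta$-smooth upper bound on the local sensitivity of $f$ if $S(x)\ge LS_f(x)$ for all $x\in D^n$ and $S(x)\le e^{\beta}S(y)$ for all $x,y$ with $d(x,y)=1$. Given functions $\alpha,\beta:(0,\infty)\to(0,\infty)$, a probability density $h$ on $\mathbb{R}^d$ is $(\alpha,\beta)$-admissible if for every $\epsilon>0$, every $\Delta\in\mathbb{R}^d$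 with $\|\Delta\|_1\le\alpha(\epsilon)$, every $\lambda\in\mathbb{R}$ with $|\lambda|\le\beta(\epsilon)$, and every measurable $\mathcal{S}\subseteq\mathbb{R}^d$, with $Z\sim h$: (sliding) $\Pr[Z\in\mathcal{S}]\le e^{\epsilon/2}\Pr[Z\in\mathcal{S}+\Delta]$, and (dilation) $\Pr[Z\in\mathcal{S}]\le e^{\epsilon/2}\Pr[Z\in e^{\lambda}\cdot\mathcal{S}]$. *)

theory Defs
  imports "HOL-Probability.Probability"
begin

definition datasets :: "'a set \<Rightarrow> nat \<Rightarrow> 'a list set" where
  "datasets D n = {x. length x = n \<and> set x \<subseteq> D}"

definition hamming :: "'a list \<Rightarrow> 'a list \<Rightarrow> nat" where
  "hamming x y = card {i. i < length x \<and> x ! i \<noteq> y ! i}"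

definition neighboring :: "'a set \<Rightarrow> nat \<Rightarrow> 'a list \<Rightarrow> 'a list \<Rightarrow> bool" where
  "neighboring D n x y \<longleftrightarrow> x \<in> datasets D n \<and> y \<in> datasets D n \<and> hamming x y = 1"

definition l1norm :: "real ^ 'd \<Rightarrow> real" where
  "l1norm v = (\<Sum>i\<in>UNIV. \<bar>v $ i\<bar>)"

text \<open>Local sensitivity (extended-real valued, so that it is meaningful even when unbounded).\<close>
definition local_sensitivity ::
  "'a set \<Rightarrow> nat \<Rightarrow> ('a list \<Rightarrow> real ^ 'd) \<Rightarrow> 'a list \<Rightarrow> ereal" where
  "local_sensitivity D n f x =
     (SUP y\<in>{y. neighboring D n x y}. ereal (l1norm (f x - f y)))"

definition smooth_upper_bound ::
  "'a set \<Rightarrow> nat \<Rightarrow> ('a list \<Rightarrow> real ^ 'd) \<Rightarrow> real \<Rightarrow> ('a list \<Rightarrow> real) \<Rightarrow> bool" where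
  "smooth_upper_bound D n f \<beta> S \<longleftrightarrow>
     (\<forall>x\<in>datasets D n. local_sensitivity D n f x \<le> ereal (S x)) \<and>
     (\<forall>x y. neighboring D n x y \<longrightarrow> S x \<le> exp \<beta> * S y)"

definition dens_prob :: "(real ^ 'd \<Rightarrow> real) \<Rightarrow> (real ^ 'd) set \<Rightarrow> real" where
  "dens_prob h A = measure (density lborel (\<lambda>z. ennreal (h z))) A"

definition admissible ::
  "(real \<Rightarrow> real) \<Rightarrow> (real \<Rightarrow> real) \<Rightarrow> (real ^ 'd \<Rightarrow> real) \<Rightarrow> bool" where
  "admissible \<alpha> \<beta> h \<longleftrightarrow>
     (\<forall>\<epsilon>>0. \<forall>\<Delta>. \<forall>l::real. \<forall>A\<in>sets borel.
        (l1norm \<Delta> \<le> \<alpha> \<epsilon> \<longrightarrow> dens_prob h A \<le> exp (\<epsilon>/2) * dens_prob h ((\<lambda>s. s + \<Delta>) ` A)) \<and>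
        (\<bar>l\<bar> \<le> \<beta> \<epsilon> \<longrightarrow> dens_prob h A \<le> exp (\<epsilon>/2) * dens_prob h ((\<lambda>s. exp l *\<^sub>R s) ` A)))"

definition differentially_private ::
  "'a set \<Rightarrow> nat \<Rightarrow> real \<Rightarrow> ('a list \<Rightarrow> 'b measure) \<Rightarrow> bool" where
  "differentially_private D n \<epsilon> M \<longleftrightarrow>
     (\<forall>x y. neighboring D n x y \<longrightarrow>
        (\<forall>T\<in>sets (M x). measure (M x) T \<le> exp \<epsilon> * measure (M y) T))"

end

theory Submission
  imports Defs
begin

(*
  The output distribution of the mechanism on x is the law of f x + s_x Z with
  s_x = S x / alpha', so its value on a Borel set T is the h-probability of
  A_x = {z. f x + s_x z : T}. For a neighbour y, sliding A_x by (f x - f y) / s_x,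
  whose l1-norm is at most alpha' because S bounds the local sensitivity, gives
  {z. f y + s_x z : T} at the cost exp (k eps / 2); dilating that set by s_x / s_y,
  whose logarithm is at most beta' in absolute value because S is beta'-smooth, gives A_y
  at the cost exp ((2 - k) eps / 2). The two costs multiply to exp eps.
*)

lemma sets_borel_affine_preimage:
  fixes v :: "'a::real_normed_vector"
  assumes "T \<in> sets borel"
  shows "{z. v + c *\<^sub>R z \<in> T} \<in> sets borel"
proof -
  have "(\<lambda>z::'a. v + c *\<^sub>R z) \<in> borel_measurable borel" by measurable
  from measurable_sets[OF this assms] show ?thesis by (simp add: vimage_def)
qed

lemma measure_distr_affine_eq_dens_prob:
  fixes Z :: "'w \<Rightarrow> real ^ 'd"
  assumes Z: "distributed M lborel Z (\<lambda>z. ennreal (h z))" and T: "T \<in> sets borel"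
  shows "measure (distr M borel (\<lambda>\<omega>. v + c *\<^sub>R Z \<omega>)) T = dens_prob h {z. v + c *\<^sub>R z \<in> T}"
proof -
  have Z_meas: "Z \<in> borel_measurable M" using distributed_measurable[OF Z] by simp
  then have "(\<lambda>\<omega>. v + c *\<^sub>R Z \<omega>) \<in> borel_measurable M" by measurable
  with T have "measure (distr M borel (\<lambda>\<omega>. v + c *\<^sub>R Z \<omega>)) T
      = measure M (Z -` {z. v + c *\<^sub>R z \<in> T} \<inter> space M)"
    by (simp add: measure_distr vimage_def)
  also have "\<dots> = measure (distr M lborel Z) {z. v + c *\<^sub>R z \<in> T}"
    using Z_meas sets_borel_affine_preimage[OF T] by (simp add: measure_distr)
  also have "\<dots> = dens_prob h {z. v + c *\<^sub>R z \<in> T}"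
    unfolding dens_prob_def using distributed_distr_eq_density[OF Z] by simp
  finally show ?thesis .
qed

lemma dens_prob_affine_preimage_shift_le:
  assumes adm: "admissible \<alpha> \<beta> h" and e: "e > 0" and T: "T \<in> sets borel" and s: "s \<noteq> 0"
    and \<Delta>: "l1norm ((1 / s) *\<^sub>R (v - w)) \<le> \<alpha> e"
  shows "dens_prob h {z. v + s *\<^sub>R z \<in> T} \<le> exp (e / 2) * dens_prob h {z. w + s *\<^sub>R z \<in> T}"
proof -
  define \<Delta> where "\<Delta> = (1 / s) *\<^sub>R (v - w)"
  have "\<And>z. v + s *\<^sub>R (z - \<Delta>) = w + s *\<^sub>R z"
    using s unfolding \<Delta>_def by (simp add: algebra_simps)
  moreover have "(\<lambda>z. z + \<Delta>) ` A = {z. z - \<Delta> \<in> A}" for A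
    by force
  ultimately have "(\<lambda>z. z + \<Delta>) ` {z. v + s *\<^sub>R z \<in> T} = {z. w + s *\<^sub>R z \<in> T}"
    by simp
  with adm e \<Delta> T sets_borel_affine_preimage[OF T] show ?thesis
    unfolding admissible_def \<Delta>_def by metis
qed

lemma dens_prob_affine_preimage_scale_le:
  assumes adm: "admissible \<alpha> \<beta> h" and e: "e > 0" and T: "T \<in> sets borel"
    and s: "s > 0" and t: "t > 0" and ln_ratio: "\<bar>ln (s / t)\<bar> \<le> \<beta> e"
  shows "dens_prob h {z. w + s *\<^sub>R z \<in> T} \<le> exp (e / 2) * dens_prob h {z. w + t *\<^sub>R z \<in> T}"
proof -
  have "exp (ln (s / t)) = s / t" using s t by simp
  moreover have "(\<lambda>z. (s / t) *\<^sub>R z) ` {z. w + s *\<^sub>R z \<in> T} = {z. w + t *\<^sub>R z \<in> T}"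
    using s t by (force simp: image_iff intro: exI[of _ "(t / s) *\<^sub>R _"])
  ultimately show ?thesis
    using adm e ln_ratio T sets_borel_affine_preimage[OF T] unfolding admissible_def by metis
qed

lemma dens_prob_affine_preimage_le:
  assumes adm: "admissible \<alpha> \<beta> h" and e: "e\<^sub>1 > 0" "e\<^sub>2 > 0" and T: "T \<in> sets borel"
    and s: "s > 0" and t: "t > 0"
    and shift: "l1norm ((1 / s) *\<^sub>R (v - w)) \<le> \<alpha> e\<^sub>1" and scale: "\<bar>ln (s / t)\<bar> \<le> \<beta> e\<^sub>2"
  shows "dens_prob h {z. v + s *\<^sub>R z \<in> T}
    \<le> exp ((e\<^sub>1 + e\<^sub>2) / 2) * dens_prob h {z. w + t *\<^sub>R z \<in> T}"
proof -
  have "dens_prob h {z. v + s *\<^sub>R z \<in> T} \<le> exp (e\<^sub>1 / 2) * dens_prob h {z. w + s *\<^sub>R z \<in> T}"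
    using dens_prob_affine_preimage_shift_le[OF adm e(1) T _ shift] s by simp
  also have "\<dots> \<le> exp (e\<^sub>1 / 2) * (exp (e\<^sub>2 / 2) * dens_prob h {z. w + t *\<^sub>R z \<in> T})"
    using dens_prob_affine_preimage_scale_le[OF adm e(2) T s t scale] by simp
  also have "\<dots> = exp ((e\<^sub>1 + e\<^sub>2) / 2) * dens_prob h {z. w + t *\<^sub>R z \<in> T}"
    by (simp add: exp_add[symmetric] add_divide_distrib)
  finally show ?thesis .
qed

lemma l1norm_scaleR: "l1norm (c *\<^sub>R v) = \<bar>c\<bar> * l1norm v"
  unfolding l1norm_def by (simp add: sum_distrib_left abs_mult)

lemma neighboring_sym: "neighboring D n x y \<Longrightarrow> neighboring D n y x"
  unfolding neighboring_def datasets_def hamming_def by (auto simp: eq_commute)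

lemma smooth_upper_bound_l1norm_le:
  assumes "smooth_upper_bound D n f b S" and "neighboring D n x y"
  shows "l1norm (f x - f y) \<le> S x"
proof -
  have "ereal (l1norm (f x - f y)) \<le> local_sensitivity D n f x"
    unfolding local_sensitivity_def using assms(2) by (auto intro: SUP_upper)
  also have "\<dots> \<le> ereal (S x)"
    using assms unfolding smooth_upper_bound_def neighboring_def by auto
  finally show ?thesis by simp
qed

lemma smooth_upper_bound_abs_ln_ratio_le:
  assumes S: "smooth_upper_bound D n f b S" and xy: "neighboring D n x y"
    and Sx: "S x > 0" and Sy: "S y > 0"
  shows "\<bar>ln (S x / S y)\<bar> \<le> b"
proof -
  have "S x \<le> exp b * S y" and "S y \<le> exp b * S x"
    using S xy neighboring_sym[OF xy] unfolding smooth_upper_bound_def by auto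
  then have "S x / S y \<le> exp b" and "exp (- b) \<le> S x / S y"
    using Sx Sy by (simp_all add: exp_minus field_simps)
  then have "ln (S x / S y) \<le> b" and "- b \<le> ln (S x / S y)"
    using Sx Sy by (metis ln_exp ln_le_cancel_iff exp_gt_zero divide_pos_pos)+
  then show ?thesis by linarith
qed

theorem theorem1:
  fixes h :: "real ^ 'd \<Rightarrow> real"
    and \<alpha> \<beta> :: "real \<Rightarrow> real"
    and \<epsilon> k :: real
    and D :: "'a set" and n :: nat
    and f :: "'a list \<Rightarrow> real ^ 'd"
    and S :: "'a list \<Rightarrow> real"
    and M :: "'w measure" and Z :: "'w \<Rightarrow> real ^ 'd"
  assumes h_meas: "h \<in> borel_measurable lborel"
    and h_nonneg: "\<forall>z. 0 \<le> h z"
    and h_int: "(\<integral>\<^sup>+ z. ennreal (h z) \<partial>lborel) = 1"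
    and \<alpha>_pos: "\<forall>e>0. \<alpha> e > 0"
    and \<beta>_pos: "\<forall>e>0. \<beta> e > 0"
    and adm: "admissible \<alpha> \<beta> h"
    and eps: "\<epsilon> > 0"
    and k: "0 < k" "k < 2"
    and S_pos: "\<forall>x\<in>datasets D n. S x > 0"
    and S_smooth: "smooth_upper_bound D n f (\<beta> ((2 - k) * \<epsilon>)) S"
    and M: "prob_space M"
    and Z: "distributed M lborel Z (\<lambda>z. ennreal (h z))"
  shows "differentially_private D n \<epsilon>
           (\<lambda>x. distr M borel (\<lambda>\<omega>. f x + (S x / \<alpha> (k * \<epsilon>)) *\<^sub>R Z \<omega>))"
  unfolding differentially_private_def
proof (intro allI impI ballI)
  fix x y T
  assume xy: "neighboring D n x y"
    and "T \<in> sets (distr M borel (\<lambda>\<omega>. f x + (S x / \<alpha> (k * \<epsilon>)) *\<^sub>R Z \<omega>))"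
  then have T: "T \<in> sets borel" by simp
  define a where "a = \<alpha> (k * \<epsilon>)"
  have e: "k * \<epsilon> > 0" "(2 - k) * \<epsilon> > 0" using eps k by auto
  have a: "a > 0" using \<alpha>_pos e unfolding a_def by simp
  have Sx: "S x > 0" and Sy: "S y > 0" using S_pos xy unfolding neighboring_def by auto
  have "l1norm ((1 / (S x / a)) *\<^sub>R (f x - f y)) = a / S x * l1norm (f x - f y)"
    using a Sx by (simp add: l1norm_scaleR)
  also have "\<dots> \<le> \<alpha> (k * \<epsilon>)"
    using smooth_upper_bound_l1norm_le[OF S_smooth xy] a Sx by (simp add: field_simps a_def)
  finally have shift: "l1norm ((1 / (S x / a)) *\<^sub>R (f x - f y)) \<le> \<alpha> (k * \<epsilon>)" .
  have scale: "\<bar>ln ((S x / a) / (S y / a))\<bar> \<le> \<beta> ((2 - k) * \<epsilon>)"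
    using smooth_upper_bound_abs_ln_ratio_le[OF S_smooth xy Sx Sy] a by simp
  have "dens_prob h {z. f x + (S x / a) *\<^sub>R z \<in> T}
      \<le> exp ((k * \<epsilon> + (2 - k) * \<epsilon>) / 2) * dens_prob h {z. f y + (S y / a) *\<^sub>R z \<in> T}"
    using dens_prob_affine_preimage_le[OF adm e T _ _ shift scale] a Sx Sy by simp
  then show "measure (distr M borel (\<lambda>\<omega>. f x + (S x / \<alpha> (k * \<epsilon>)) *\<^sub>R Z \<omega>)) T
      \<le> exp \<epsilon> * measure (distr M borel (\<lambda>\<omega>. f y + (S y / \<alpha> (k * \<epsilon>)) *\<^sub>R Z \<omega>)) T"
    by (simp add: measure_distr_affine_eq_dens_prob[OF Z T] a_def algebra_simps)
qed

end
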